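(* Let $G$ be a graph with finitely many vertices. Let $v\in G^0$ be a regular vertex that is not a source and that emits exactly one edge $f_0$, where $f_0$ is not a loop of length one (i.e. $r(f_0)\neq v$). Define a graph $E$ as follows: - $E^0=G^0\setminus\{v\}$; - $E^1=(G^1\setminus(r^{-1}(v)\cup s^{-1}(v)))\cup\{[ef_0]: e\in r^{-1}(v)\}$; - range and source maps extend those of $G$, with $r_E([ef_0])=r_G(f_0)$ and $s_E([ef_0])=s_G(e)$. Then $G\sim_M E$.
   Context: A graph $G=(G^0,G^1,r,s)$ has vertex set $G^0$, edge set $G^1$, and range/source maps; multiple edges and loops are allowed. A source receives no edges, a sink emits no edges, and an infinite emitter emits infinitely many edges. A vertex is singular if it is a sink or infinite emitter, and regular otherwise. A loop of length one is an edge $e$ with $s(e)=r(e)$. Move-equivalence $\sim_M$ is the smallest equivalence relation on graphs with finitely many vertices such that $G\sim_M E$ whenever $E$ is isomorphic to a graph obtained from $G$ by one of the following moves. (S) Delete a regular source together with the edges it emits. (R) For a regular vertex $u$ emitting exactly one edge $f$, with $r(f)\neq u$, and all of whose incoming edges have the same source $v$: delete $u$, $f$ and the edges into $u$, and add for each $e\in r^{-1}(u)$ an edge $[ef]$ from $v$ to $r(f)$. (O) Out-splitting at a non-sink $v$ along a partition $\mathcal E_1,\dots,\mathcal E_n$ of $s^{-1}(v)$ with at most one infinite part. Replace $v$ by $v^1,\dots,v^n$. Each edge $e$ into $v$ becomes copies $e^1,\dots,e^n$ with $r(e^i)=v^i$ and source $s(e)$, or source $v^j$ if $s(e)=v$ and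 $e\in\mathcal E_j$. An edge from $v$ to $w\neq v$ lying in $\mathcal E_i$ gets source $v^i$. (I) In-splitting at a regular non-source $v$ along a partition $\mathcal E_1,\dots,\mathcal E_n$ of $r^{-1}(v)$. Replace $v$ by $v^1,\dots,v^n$. Each edge $e$ out of $v$ becomes copies $e^1,\dots,e^n$ with $s(e^i)=v^i$ and range $r(e)$, or range $v^j$ if $r(e)=v$ and $e\in\mathcal E_j$. An edge into $v$ from $w\neq v$ lying in $\mathcal E_i$ gets range $v^i$. *)

theory Defs
  imports Main
begin

record ('v, 'e) dgraph =
  verts :: "'v set"
  edges :: "'e set"
  rng   :: "'e \<Rightarrow> 'v"
  src   :: "'e \<Rightarrow> 'v"

definition is_graph :: "('v, 'e) dgraph \<Rightarrow> bool" where
  "is_graph G \<longleftrightarrow> (\<forall>e \<in> edges G. src G e \<in> verts G \<and> rng G e \<in> verts G)"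

definition fin_graph :: "('v, 'e) dgraph \<Rightarrow> bool" where
  "fin_graph G \<longleftrightarrow> is_graph G \<and> finite (verts G)"

definition out_edges :: "('v, 'e) dgraph \<Rightarrow> 'v \<Rightarrow> 'e set" where
  "out_edges G v = {e \<in> edges G. src G e = v}"

definition in_edges :: "('v, 'e) dgraph \<Rightarrow> 'v \<Rightarrow> 'e set" where
  "in_edges G v = {e \<in> edges G. rng G e = v}"

definition is_source :: "('v, 'e) dgraph \<Rightarrow> 'v \<Rightarrow> bool" where
  "is_source G v \<longleftrightarrow> in_edges G v = {}"

definition is_sink :: "('v, 'e) dgraph \<Rightarrow> 'v \<Rightarrow> bool" where
  "is_sink G v \<longleftrightarrow> out_edges G v = {}"

definition regular :: "('v, 'e) dgraph \<Rightarrow> 'v \<Rightarrow> bool" where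
  "regular G v \<longleftrightarrow> out_edges G v \<noteq> {} \<and> finite (out_edges G v)"

definition graph_iso :: "('v, 'e) dgraph \<Rightarrow> ('w, 'f) dgraph \<Rightarrow> bool" where
  "graph_iso G H \<longleftrightarrow> (\<exists>\<phi> \<psi>. bij_betw \<phi> (verts G) (verts H) \<and> bij_betw \<psi> (edges G) (edges H) \<and>
     (\<forall>e \<in> edges G. rng H (\<psi> e) = \<phi> (rng G e) \<and> src H (\<psi> e) = \<phi> (src G e)))"

definition move_S :: "('v, 'e) dgraph \<Rightarrow> 'v \<Rightarrow> ('v, 'e) dgraph \<Rightarrow> bool" where
  "move_S G u M \<longleftrightarrow> u \<in> verts G \<and> regular G u \<and> is_source G u \<and>
     M = \<lparr>verts = verts G - {u}, edges = edges G - out_edges G u, rng = rng G, src = src G\<rparr>"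

text \<open>(R) Collapse a regular vertex u emitting exactly one edge f (not a loop) whose incoming
  edges all have the same source.  Kept edges are tagged Inl, new edges [e f] are tagged Inr e.\<close>
definition move_R :: "('v, 'e) dgraph \<Rightarrow> 'v \<Rightarrow> ('v, 'e + 'e) dgraph \<Rightarrow> bool" where
  "move_R G u M \<longleftrightarrow> (\<exists>f. u \<in> verts G \<and> regular G u \<and> out_edges G u = {f} \<and> rng G f \<noteq> u \<and>
     (\<exists>w. \<forall>e \<in> in_edges G u. src G e = w) \<and>
     M = \<lparr>verts = verts G - {u},
          edges = Inl ` (edges G - in_edges G u - {f}) \<union> Inr ` in_edges G u,
          rng = case_sum (rng G) (\<lambda>e. rng G f),
          src = case_sum (src G) (src G)\<rparr>)"

definition partition_fun :: "'e set \<Rightarrow> nat \<Rightarrow> ('e \<Rightarrow> nat) \<Rightarrow> bool" where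
  "partition_fun A n P \<longleftrightarrow> 0 < n \<and> (\<forall>e \<in> A. P e < n) \<and> (\<forall>i < n. \<exists>e \<in> A. P e = i)"

definition at_most_one_infinite_part :: "'e set \<Rightarrow> nat \<Rightarrow> ('e \<Rightarrow> nat) \<Rightarrow> bool" where
  "at_most_one_infinite_part A n P \<longleftrightarrow> card {i. i < n \<and> infinite {e \<in> A. P e = i}} \<le> 1"

text \<open>(O) Out-splitting at a non-sink v.  Vertex w \<noteq> v becomes (w,0), v becomes v^i = (v,i);
  an edge e not into v becomes (e,0), an edge e into v becomes copies e^i = (e,i), i < n.\<close>
definition move_O :: "('v, 'e) dgraph \<Rightarrow> 'v \<Rightarrow> nat \<Rightarrow> ('e \<Rightarrow> nat) \<Rightarrow> ('v \<times> nat, 'e \<times> nat) dgraph \<Rightarrow> bool" where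
  "move_O G v n P M \<longleftrightarrow> v \<in> verts G \<and> \<not> is_sink G v \<and>
     partition_fun (out_edges G v) n P \<and> at_most_one_infinite_part (out_edges G v) n P \<and>
     M = \<lparr>verts = (\<lambda>w. (w, 0)) ` (verts G - {v}) \<union> (\<lambda>i. (v, i)) ` {..<n},
          edges = (\<lambda>e. (e, 0)) ` {e \<in> edges G. rng G e \<noteq> v} \<union>
                  {(e, i) | e i. e \<in> edges G \<and> rng G e = v \<and> i < n},
          rng = (\<lambda>(e, i). if rng G e = v then (v, i) else (rng G e, 0)),
          src = (\<lambda>(e, i). if src G e = v then (v, P e) else (src G e, 0))\<rparr>"

text \<open>(I) In-splitting at a regular non-source v.  Vertex w \<noteq> v becomes (w,0), v becomes
  v^i = (v,i); an edge e not out of v becomes (e,0), an edge e out of v becomes copies (e,i).\<close>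
definition move_I :: "('v, 'e) dgraph \<Rightarrow> 'v \<Rightarrow> nat \<Rightarrow> ('e \<Rightarrow> nat) \<Rightarrow> ('v \<times> nat, 'e \<times> nat) dgraph \<Rightarrow> bool" where
  "move_I G v n P M \<longleftrightarrow> v \<in> verts G \<and> regular G v \<and> \<not> is_source G v \<and>
     partition_fun (in_edges G v) n P \<and>
     M = \<lparr>verts = (\<lambda>w. (w, 0)) ` (verts G - {v}) \<union> (\<lambda>i. (v, i)) ` {..<n},
          edges = (\<lambda>e. (e, 0)) ` {e \<in> edges G. src G e \<noteq> v} \<union>
                  {(e, i) | e i. e \<in> edges G \<and> src G e = v \<and> i < n},
          rng = (\<lambda>(e, i). if rng G e = v then (v, P e) else (rng G e, 0)),
          src = (\<lambda>(e, i). if src G e = v then (v, i) else (src G e, 0))\<rparr>"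

definition move_step :: "('v, 'e) dgraph \<Rightarrow> ('v, 'e) dgraph \<Rightarrow> bool" where
  "move_step G H \<longleftrightarrow> fin_graph G \<and> fin_graph H \<and>
     ((\<exists>u M. move_S G u M \<and> graph_iso M H) \<or>
      (\<exists>u M. move_R G u M \<and> graph_iso M H) \<or>
      (\<exists>v n P M. move_O G v n P M \<and> graph_iso M H) \<or>
      (\<exists>v n P M. move_I G v n P M \<and> graph_iso M H))"

definition move_equiv :: "('v, 'e) dgraph \<Rightarrow> ('v, 'e) dgraph \<Rightarrow> bool" where
  "move_equiv G H \<longleftrightarrow> fin_graph G \<and> fin_graph H \<and> (sup move_step move_step\<inverse>\<inverse>)\<^sup>*\<^sup>* G H"

end

theory Submission
  imports Defs
begin

text \<open>If all edges into v have the same source, E arises from G by a single move (R). Otherwise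
  pick a source w of an edge into v and in-split v into (v, 0), receiving the edges from w, and
  (v, 1), receiving all other edges. Now (v, 0) has a single source and the single outgoing edge
  (f0, 0), so (R) removes it; this leaves (v, 1) in the position of v with one source fewer, and
  collapsing it yields E up to isomorphism. Induction on the number of sources concludes. The moves
  produce graphs on new vertex and edge types, which are relabelled into the original ones; this is
  where the infiniteness of the types is needed.\<close>

definition graph_iso_by :: "('v, 'e) dgraph \<Rightarrow> ('w, 'f) dgraph \<Rightarrow> ('v \<Rightarrow> 'w) \<Rightarrow> ('e \<Rightarrow> 'f) \<Rightarrow> bool" where
  "graph_iso_by G H \<phi> \<psi> \<longleftrightarrow> bij_betw \<phi> (verts G) (verts H) \<and> bij_betw \<psi> (edges G) (edges H) \<and>
     (\<forall>e \<in> edges G. rng H (\<psi> e) = \<phi> (rng G e) \<and> src H (\<psi> e) = \<phi> (src G e))"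

lemma graph_iso_iff_graph_iso_by: "graph_iso G H \<longleftrightarrow> (\<exists>\<phi> \<psi>. graph_iso_by G H \<phi> \<psi>)"
  unfolding graph_iso_def graph_iso_by_def by blast

lemma graph_iso_by_comp:
  assumes "graph_iso_by G H \<phi> \<psi>" and "graph_iso_by H K \<phi>' \<psi>'"
  shows "graph_iso_by G K (\<phi>' \<circ> \<phi>) (\<psi>' \<circ> \<psi>)"
proof -
  have "\<psi> e \<in> edges H" if "e \<in> edges G" for e
    using that assms(1) unfolding graph_iso_by_def by (auto dest: bij_betw_apply)
  then show ?thesis
    using assms unfolding graph_iso_by_def by (auto intro: bij_betw_trans)
qed

lemma graph_iso_by_inv_into:
  assumes iso: "graph_iso_by G H \<phi> \<psi>" and "is_graph G"
  shows "graph_iso_by H G (inv_into (verts G) \<phi>) (inv_into (edges G) \<psi>)"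
proof -
  have bv: "bij_betw \<phi> (verts G) (verts H)" and be: "bij_betw \<psi> (edges G) (edges H)"
    using iso unfolding graph_iso_by_def by auto
  have adj: "rng G e = inv_into (verts G) \<phi> (rng H (\<psi> e)) \<and>
      src G e = inv_into (verts G) \<phi> (src H (\<psi> e))" if "e \<in> edges G" for e
    using that iso \<open>is_graph G\<close> bij_betw_inv_into_left[OF bv]
    unfolding graph_iso_by_def is_graph_def by auto
  show ?thesis
    unfolding graph_iso_by_def
  proof (intro conjI ballI)
    fix e assume "e \<in> edges H"
    then have "inv_into (edges G) \<psi> e \<in> edges G" and "\<psi> (inv_into (edges G) \<psi> e) = e"
      using be by (auto simp: bij_betw_def inv_into_into f_inv_into_f)
    then show "rng G (inv_into (edges G) \<psi> e) = inv_into (verts G) \<phi> (rng H e)"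
      and "src G (inv_into (edges G) \<psi> e) = inv_into (verts G) \<phi> (src H e)"
      using adj by metis+
  qed (use bij_betw_inv_into[OF bv] bij_betw_inv_into[OF be] in auto)
qed

lemma graph_iso_trans: "graph_iso G H \<Longrightarrow> graph_iso H K \<Longrightarrow> graph_iso G K"
  unfolding graph_iso_iff_graph_iso_by using graph_iso_by_comp by blast

lemma graph_iso_sym: "graph_iso G H \<Longrightarrow> is_graph G \<Longrightarrow> graph_iso H G"
  unfolding graph_iso_iff_graph_iso_by using graph_iso_by_inv_into by blast

lemma graph_iso_by_is_graph:
  assumes iso: "graph_iso_by G H \<phi> \<psi>" and "is_graph G"
  shows "is_graph H"
  unfolding is_graph_def
proof
  fix x assume "x \<in> edges H"
  then obtain e where "e \<in> edges G" "x = \<psi> e"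
    using iso unfolding graph_iso_by_def bij_betw_def by blast
  then show "src H x \<in> verts H \<and> rng H x \<in> verts H"
    using assms unfolding graph_iso_by_def is_graph_def by (auto dest: bij_betw_apply)
qed

lemma graph_iso_by_fin_graph: "graph_iso_by G H \<phi> \<psi> \<Longrightarrow> fin_graph G \<Longrightarrow> fin_graph H"
  using graph_iso_by_is_graph[of G H] bij_betw_finite unfolding fin_graph_def graph_iso_by_def by blast

lemma graph_iso_by_in_edges:
  assumes iso: "graph_iso_by G H \<phi> \<psi>" and "is_graph G" and "u \<in> verts G"
  shows "in_edges H (\<phi> u) = \<psi> ` in_edges G u"
proof -
  have "rng G e = u" if "e \<in> edges G" "\<phi> (rng G e) = \<phi> u" for e
    using that assms unfolding graph_iso_by_def is_graph_def bij_betw_def inj_on_def by blast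
  moreover have "edges H = \<psi> ` edges G"
    using iso unfolding graph_iso_by_def bij_betw_def by simp
  ultimately show ?thesis
    using iso unfolding graph_iso_by_def in_edges_def by auto
qed

lemma graph_iso_by_out_edges:
  assumes iso: "graph_iso_by G H \<phi> \<psi>" and "is_graph G" and "u \<in> verts G"
  shows "out_edges H (\<phi> u) = \<psi> ` out_edges G u"
proof -
  have "src G e = u" if "e \<in> edges G" "\<phi> (src G e) = \<phi> u" for e
    using that assms unfolding graph_iso_by_def is_graph_def bij_betw_def inj_on_def by blast
  moreover have "edges H = \<psi> ` edges G"
    using iso unfolding graph_iso_by_def bij_betw_def by simp
  ultimately show ?thesis
    using iso unfolding graph_iso_by_def out_edges_def by auto
qed

abbreviation in_sources :: "('v, 'e) dgraph \<Rightarrow> 'v \<Rightarrow> 'v set" where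
  "in_sources G v \<equiv> src G ` in_edges G v"

lemma graph_iso_by_in_sources:
  assumes iso: "graph_iso_by G H \<phi> \<psi>" and "is_graph G" and "u \<in> verts G"
  shows "in_sources H (\<phi> u) = \<phi> ` in_sources G u"
proof -
  have "in_sources H (\<phi> u) = (\<lambda>e. src H (\<psi> e)) ` in_edges G u"
    by (simp add: graph_iso_by_in_edges[OF assms] image_image)
  also have "\<dots> = (\<lambda>e. \<phi> (src G e)) ` in_edges G u"
    using iso unfolding graph_iso_by_def in_edges_def by (intro image_cong) auto
  finally show ?thesis
    unfolding image_image .
qed

definition relabel :: "('a \<Rightarrow> 'v) \<Rightarrow> ('b \<Rightarrow> 'e) \<Rightarrow> ('a, 'b) dgraph \<Rightarrow> ('v, 'e) dgraph" where
  "relabel \<phi> \<psi> M = \<lparr>verts = \<phi> ` verts M, edges = \<psi> ` edges M,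
      rng = \<lambda>e. \<phi> (rng M (inv \<psi> e)), src = \<lambda>e. \<phi> (src M (inv \<psi> e))\<rparr>"

lemma graph_iso_by_relabel: "inj \<phi> \<Longrightarrow> inj \<psi> \<Longrightarrow> graph_iso_by M (relabel \<phi> \<psi> M) \<phi> \<psi>"
  unfolding graph_iso_by_def relabel_def by (auto simp: bij_betw_def inj_on_def)

lemma infinite_inj_prod_nat:
  assumes "infinite (UNIV :: 'a set)"
  obtains f :: "'a \<times> nat \<Rightarrow> 'a" where "inj f"
proof -
  have "ordLeq3 (card_of (UNIV :: nat set)) (card_of (UNIV :: 'a set))"
    using assms infinite_iff_card_of_nat by blast
  then have "ordIso2 (card_of ((UNIV :: 'a set) \<times> (UNIV :: nat set))) (card_of (UNIV :: 'a set))"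
    using card_of_Times_infinite[of "UNIV :: 'a set" "UNIV :: nat set"] assms by auto
  then have "ordLeq3 (card_of ((UNIV :: 'a set) \<times> (UNIV :: nat set))) (card_of (UNIV :: 'a set))"
    using ordIso_iff_ordLeq by blast
  then obtain f :: "'a \<times> nat \<Rightarrow> 'a" where "inj_on f (UNIV \<times> UNIV)"
    using card_of_ordLeq[of "UNIV \<times> UNIV" "UNIV :: 'a set"] by blast
  then show ?thesis using that by simp
qed

lemma infinite_inj_sum:
  assumes "infinite (UNIV :: 'a set)"
  obtains h :: "'a + 'a \<Rightarrow> 'a" where "inj h"
proof -
  obtain f :: "'a \<times> nat \<Rightarrow> 'a" where f: "inj f"
    using infinite_inj_prod_nat[OF assms] .
  have "inj (case_sum (\<lambda>x. (x, 0 :: nat)) (\<lambda>x. (x, 1)))"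
    by (rule injI) (auto split: sum.split_asm)
  then show ?thesis using that inj_compose[OF f] by blast
qed

lemma bij_betw_case_sum:
  assumes f: "inj_on f A" and g: "inj_on g B" and disj: "f ` A \<inter> g ` B = {}"
  shows "bij_betw (case_sum f g) (Inl ` A \<union> Inr ` B) (f ` A \<union> g ` B)"
proof -
  have "inj_on (case_sum f g) (Inl ` A \<union> Inr ` B)"
    unfolding inj_on_def
  proof (intro ballI impI)
    fix x y assume "x \<in> Inl ` A \<union> Inr ` B" "y \<in> Inl ` A \<union> Inr ` B"
      and "case_sum f g x = case_sum f g y"
    then show "x = y"
      using disj by (elim UnE imageE) (auto simp: inj_on_eq_iff[OF f] inj_on_eq_iff[OF g])
  qed
  then show ?thesis
    unfolding bij_betw_def by (simp add: image_Un image_image)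
qed

section \<open>Collapsing a vertex\<close>

definition collapse :: "('v, 'e) dgraph \<Rightarrow> 'v \<Rightarrow> 'e \<Rightarrow> ('v, 'e + 'e) dgraph" where
  "collapse G u f = \<lparr>verts = verts G - {u},
     edges = Inl ` (edges G - in_edges G u - {f}) \<union> Inr ` in_edges G u,
     rng = case_sum (rng G) (\<lambda>e. rng G f),
     src = case_sum (src G) (src G)\<rparr>"

text \<open>The hypotheses of move (R) except that all edges into the vertex have the same source.\<close>

definition collapsible :: "('v, 'e) dgraph \<Rightarrow> 'v \<Rightarrow> 'e \<Rightarrow> bool" where
  "collapsible G v f \<longleftrightarrow> fin_graph G \<and> v \<in> verts G \<and> \<not> is_source G v \<and>
     out_edges G v = {f} \<and> rng G f \<noteq> v"

lemma collapsibleD: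
  assumes "collapsible G v f"
  shows "is_graph G" "finite (verts G)" "v \<in> verts G" "f \<in> edges G" "src G f = v"
    "rng G f \<noteq> v" "in_edges G v \<noteq> {}"
    "\<And>e. e \<in> edges G \<Longrightarrow> src G e = v \<longleftrightarrow> e = f"
    "\<And>e. e \<in> in_edges G v \<Longrightarrow> src G e \<noteq> v"
    "in_sources G v \<subseteq> verts G" "finite (in_sources G v)"
  using assms unfolding collapsible_def fin_graph_def is_source_def is_graph_def
    out_edges_def in_edges_def
  by (auto intro: finite_subset)

lemma fin_graph_collapse: "collapsible G v f \<Longrightarrow> fin_graph (collapse G v f)"
  using collapsibleD[of G v f] unfolding fin_graph_def is_graph_def collapse_def in_edges_def
  by (auto simp: is_graph_def)

lemma move_R_collapse:
  assumes "collapsible G v f" and "in_sources G v = {w}"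
  shows "move_R G v (collapse G v f)"
proof -
  have "regular G v" and "\<forall>e \<in> in_edges G v. src G e = w"
    using assms unfolding collapsible_def regular_def by auto
  then show ?thesis
    using assms(1) unfolding move_R_def collapsible_def collapse_def by blast
qed

lemma graph_iso_by_collapse:
  assumes iso: "graph_iso_by G H \<phi> \<psi>" and "is_graph G" and "u \<in> verts G" and "f \<in> edges G"
  shows "graph_iso_by (collapse G u f) (collapse H (\<phi> u) (\<psi> f)) \<phi> (map_sum \<psi> \<psi>)"
proof -
  have bv: "bij_betw \<phi> (verts G) (verts H)" and be: "bij_betw \<psi> (edges G) (edges H)"
    and adj: "\<forall>e \<in> edges G. rng H (\<psi> e) = \<phi> (rng G e) \<and> src H (\<psi> e) = \<phi> (src G e)"
    using iso unfolding graph_iso_by_def by auto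
  have in_H: "in_edges H (\<phi> u) = \<psi> ` in_edges G u"
    using graph_iso_by_in_edges[OF assms(1-3)] .
  have in_G: "in_edges G u \<subseteq> edges G"
    unfolding in_edges_def by auto
  let ?K = "edges G - in_edges G u - {f}"
  have bV: "bij_betw \<phi> (verts (collapse G u f)) (verts (collapse H (\<phi> u) (\<psi> f)))"
    using bij_betw_DiffI[OF bv, of "{u}" "{\<phi> u}"] \<open>u \<in> verts G\<close> bv
    unfolding collapse_def by (auto simp: bij_betw_def)
  have bK: "bij_betw \<psi> ?K (edges H - in_edges H (\<phi> u) - {\<psi> f})"
  proof -
    have removed: "in_edges G u \<union> {f} \<subseteq> edges G"
      using in_G \<open>f \<in> edges G\<close> by blast
    have "bij_betw \<psi> (in_edges G u \<union> {f}) (\<psi> ` (in_edges G u \<union> {f}))"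
      using bij_betw_subset[OF be removed] by simp
    moreover have "\<psi> ` (in_edges G u \<union> {f}) \<subseteq> edges H"
      using removed bij_betw_imp_surj_on[OF be] by blast
    ultimately have "bij_betw \<psi> (edges G - (in_edges G u \<union> {f})) (edges H - \<psi> ` (in_edges G u \<union> {f}))"
      using bij_betw_DiffI[OF be _ removed] by blast
    moreover have "edges G - (in_edges G u \<union> {f}) = ?K"
      and "edges H - \<psi> ` (in_edges G u \<union> {f}) = edges H - \<psi> ` in_edges G u - {\<psi> f}"
      by blast+
    ultimately show ?thesis
      unfolding in_H by simp
  qed
  have bI: "bij_betw \<psi> (in_edges G u) (in_edges H (\<phi> u))"
    unfolding in_H using be in_G by (auto intro: bij_betw_subset)
  have "map_sum \<psi> \<psi> = case_sum (Inl \<circ> \<psi>) (Inr \<circ> \<psi>)"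
    by (rule ext) (simp split: sum.split)
  moreover have "bij_betw (case_sum (Inl \<circ> \<psi>) (Inr \<circ> \<psi>)) (Inl ` ?K \<union> Inr ` in_edges G u)
      ((Inl \<circ> \<psi>) ` ?K \<union> (Inr \<circ> \<psi>) ` in_edges G u)"
    using bK bI by (intro bij_betw_case_sum) (auto simp: bij_betw_def inj_on_def)
  ultimately have "bij_betw (map_sum \<psi> \<psi>) (edges (collapse G u f)) (edges (collapse H (\<phi> u) (\<psi> f)))"
    using bij_betw_imp_surj_on[OF bK] bij_betw_imp_surj_on[OF bI]
    unfolding collapse_def image_comp[symmetric] by simp
  moreover have "\<forall>x \<in> edges (collapse G u f).
      rng (collapse H (\<phi> u) (\<psi> f)) (map_sum \<psi> \<psi> x) = \<phi> (rng (collapse G u f) x) \<and>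
      src (collapse H (\<phi> u) (\<psi> f)) (map_sum \<psi> \<psi> x) = \<phi> (src (collapse G u f) x)"
    using adj in_G \<open>f \<in> edges G\<close> unfolding collapse_def by auto
  ultimately show ?thesis
    using bV unfolding graph_iso_by_def by blast
qed

lemma graph_iso_by_collapsible:
  assumes iso: "graph_iso_by G H \<phi> \<psi>" and coll: "collapsible G v f"
  shows "collapsible H (\<phi> v) (\<psi> f)"
proof -
  note G = collapsibleD[OF coll]
  have "\<phi> (rng G f) \<noteq> \<phi> v"
    using iso G unfolding graph_iso_by_def bij_betw_def inj_on_def is_graph_def by metis
  moreover have "rng H (\<psi> f) = \<phi> (rng G f)" and "\<phi> v \<in> verts H"
    using iso G unfolding graph_iso_by_def bij_betw_def by auto
  ultimately show ?thesis
    using coll graph_iso_by_fin_graph[OF iso] graph_iso_by_in_edges[OF iso G(1,3)]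
      graph_iso_by_out_edges[OF iso G(1,3)]
    unfolding collapsible_def is_source_def by auto
qed

section \<open>Splitting off one source\<close>

definition in_split :: "('v, 'e) dgraph \<Rightarrow> 'v \<Rightarrow> nat \<Rightarrow> ('e \<Rightarrow> nat) \<Rightarrow> ('v \<times> nat, 'e \<times> nat) dgraph" where
  "in_split G v n P = \<lparr>verts = (\<lambda>w. (w, 0)) ` (verts G - {v}) \<union> (\<lambda>i. (v, i)) ` {..<n},
     edges = (\<lambda>e. (e, 0)) ` {e \<in> edges G. src G e \<noteq> v} \<union>
             {(e, i) | e i. e \<in> edges G \<and> src G e = v \<and> i < n},
     rng = (\<lambda>(e, i). if rng G e = v then (v, P e) else (rng G e, 0)),
     src = (\<lambda>(e, i). if src G e = v then (v, i) else (src G e, 0))\<rparr>"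

lemma move_I_in_split:
  "v \<in> verts G \<Longrightarrow> regular G v \<Longrightarrow> \<not> is_source G v \<Longrightarrow> partition_fun (in_edges G v) n P \<Longrightarrow>
    move_I G v n P (in_split G v n P)"
  unfolding move_I_def in_split_def by simp

locale source_split =
  fixes G :: "('v, 'e) dgraph" and v :: 'v and f :: 'e and w :: 'v
  assumes collapsible: "collapsible G v f"
    and w_in_sources: "w \<in> in_sources G v" and other_source: "in_sources G v \<noteq> {w}"
begin

abbreviation part :: "'e \<Rightarrow> nat" where
  "part e \<equiv> if src G e = w then 0 else 1"

abbreviation split :: "('v \<times> nat, 'e \<times> nat) dgraph" where
  "split \<equiv> in_split G v 2 part"

abbreviation reduced :: "('v \<times> nat, ('e \<times> nat) + ('e \<times> nat)) dgraph" where
  "reduced \<equiv> collapse split (v, 0) (f, 0)"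

abbreviation in_from_w :: "'e set" where
  "in_from_w \<equiv> {e \<in> in_edges G v. src G e = w}"

abbreviation in_other :: "'e set" where
  "in_other \<equiv> {e \<in> in_edges G v. src G e \<noteq> w}"

lemmas G_facts = collapsibleD[OF collapsible]

lemma w_neq_v: "w \<noteq> v"
  using w_in_sources G_facts(9) by auto

lemma in_from_w_nonempty: "in_from_w \<noteq> {}"
  using w_in_sources by auto

lemma in_other_nonempty: "in_other \<noteq> {}"
  using w_in_sources other_source by auto

lemma edges_split: "edges split = (\<lambda>e. (e, 0)) ` edges G \<union> {(f, 1)}"
  using G_facts unfolding in_split_def by (auto simp: less_2_cases_iff image_iff)

lemma in_edges_split_0: "in_edges split (v, 0) = (\<lambda>e. (e, 0)) ` in_from_w"
  using G_facts unfolding in_edges_def edges_split by (auto simp: in_split_def split: if_splits)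

lemma out_edges_split_0: "out_edges split (v, 0) = {(f, 0)}"
  using G_facts unfolding out_edges_def edges_split by (auto simp: in_split_def split: if_splits)

lemma collapsible_split: "collapsible split (v, 0) (f, 0)"
proof -
  have "is_graph split"
    using G_facts unfolding is_graph_def edges_split by (auto simp: in_split_def is_graph_def)
  then show ?thesis
    unfolding collapsible_def fin_graph_def is_source_def
    using in_edges_split_0 out_edges_split_0 in_from_w_nonempty G_facts by (auto simp: in_split_def)
qed

lemma in_sources_split_0: "in_sources split (v, 0) = {(w, 0)}"
proof -
  have "in_sources split (v, 0) = (\<lambda>_. (w, 0)) ` in_from_w"
    unfolding in_edges_split_0 image_image
    using G_facts(9) by (intro image_cong) (auto simp: in_split_def)
  then show ?thesis
    using in_from_w_nonempty by (simp add: image_constant_conv)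
qed

lemma move_I_split: "move_I G v 2 part split"
proof (rule move_I_in_split)
  show "partition_fun (in_edges G v) 2 part"
    unfolding partition_fun_def
    using in_from_w_nonempty in_other_nonempty by (auto simp: less_2_cases_iff)
qed (use collapsible in \<open>auto simp: collapsible_def regular_def\<close>)

lemma edges_reduced:
  "edges reduced = Inl ` ((\<lambda>e. (e, 0)) ` (edges G - {f} - in_from_w) \<union> {(f, 1)}) \<union>
    Inr ` (\<lambda>e. (e, 0)) ` in_from_w"
  unfolding collapse_def in_edges_split_0 edges_split by auto

lemma in_edges_reduced_1: "in_edges reduced (v, 1) = Inl ` (\<lambda>e. (e, 0)) ` in_other"
  using G_facts unfolding in_edges_def edges_reduced
  by (auto simp: collapse_def in_split_def split: if_splits)

lemma out_edges_reduced_1: "out_edges reduced (v, 1) = {Inl (f, 1)}"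
  using G_facts w_neq_v unfolding out_edges_def edges_reduced
  by (auto simp: collapse_def in_split_def split: if_splits)

lemma collapsible_reduced: "collapsible reduced (v, 1) (Inl (f, 1))"
  using fin_graph_collapse[OF collapsible_split] in_edges_reduced_1 out_edges_reduced_1
    in_other_nonempty G_facts
  unfolding collapsible_def is_source_def by (auto simp: in_split_def collapse_def)

lemma in_sources_reduced_1: "in_sources reduced (v, 1) = (\<lambda>u. (u, 0)) ` (in_sources G v - {w})"
proof -
  have "in_sources reduced (v, 1) = (\<lambda>e. (src G e, 0)) ` in_other"
    unfolding in_edges_reduced_1 image_image
    using G_facts(9) by (intro image_cong) (auto simp: collapse_def in_split_def)
  also have "\<dots> = (\<lambda>u. (u, 0)) ` (in_sources G v - {w})"
    by auto
  finally show ?thesis .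
qed

lemma graph_iso_by_collapse_reduced:
  defines "\<psi> \<equiv> case_sum (case_sum (Inl \<circ> fst) (Inr \<circ> fst)) (Inr \<circ> fst \<circ> case_sum id id)"
  shows "graph_iso_by (collapse reduced (v, 1) (Inl (f, 1))) (collapse G v f) fst \<psi>"
proof -
  let ?K = "edges G - in_edges G v - {f}"
  have "edges G - {f} - in_from_w = ?K \<union> in_other"
    using G_facts(4,6) by (auto simp: in_edges_def)
  then have "edges reduced - in_edges reduced (v, 1) - {Inl (f, 1)} =
      Inl ` (\<lambda>e. (e, 0)) ` ?K \<union> Inr ` (\<lambda>e. (e, 0)) ` in_from_w"
    unfolding edges_reduced in_edges_reduced_1 by (auto simp: in_edges_def)
  then have edges_L: "edges (collapse reduced (v, 1) (Inl (f, 1))) =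
      Inl ` (Inl ` (\<lambda>e. (e, 0)) ` ?K \<union> Inr ` (\<lambda>e. (e, 0)) ` in_from_w) \<union>
      Inr ` Inl ` (\<lambda>e. (e, 0)) ` in_other"
    unfolding collapse_def[of reduced] in_edges_reduced_1 by simp
  have edges_R: "edges (collapse G v f) = Inl ` ?K \<union> Inr ` in_edges G v"
    unfolding collapse_def by simp
  have "bij_betw \<psi> (edges (collapse reduced (v, 1) (Inl (f, 1)))) (edges (collapse G v f))"
    unfolding edges_L edges_R \<psi>_def
    by (rule bij_betw_byWitness[where f' = "case_sum (\<lambda>e. Inl (Inl (e, 0)))
        (\<lambda>e. if src G e = w then Inl (Inr (e, 0)) else Inr (Inl (e, 0)))"])
      (use G_facts in \<open>auto simp: in_edges_def\<close>)
  moreover have "bij_betw fst (verts (collapse reduced (v, 1) (Inl (f, 1)))) (verts (collapse G v f))"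
  proof -
    have "verts (collapse reduced (v, 1) (Inl (f, 1))) = (\<lambda>u. (u, 0 :: nat)) ` (verts G - {v})"
      by (auto simp: collapse_def in_split_def less_2_cases_iff)
    then show ?thesis
      unfolding bij_betw_def inj_on_def by (auto simp: collapse_def image_image)
  qed
  moreover have "rng (collapse G v f) (\<psi> x) = fst (rng (collapse reduced (v, 1) (Inl (f, 1))) x) \<and>
      src (collapse G v f) (\<psi> x) = fst (src (collapse reduced (v, 1) (Inl (f, 1))) x)"
    if "x \<in> edges (collapse reduced (v, 1) (Inl (f, 1)))" for x
  proof -
    from that consider (kept) e where "e \<in> ?K" "x = Inl (Inl (e, 0))"
      | (from_w) e where "e \<in> in_from_w" "x = Inl (Inr (e, 0))"
      | (other) e where "e \<in> in_other" "x = Inr (Inl (e, 0))"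
      unfolding edges_L by blast
    then show ?thesis
    proof cases
      case kept
      then have "rng G e \<noteq> v" "src G e \<noteq> v"
        using G_facts(8) by (auto simp: in_edges_def)
      then show ?thesis using kept by (simp add: collapse_def in_split_def \<psi>_def)
    next
      case from_w
      then show ?thesis using G_facts(5,6,9) by (simp add: collapse_def in_split_def \<psi>_def in_edges_def)
    next
      case other
      then show ?thesis using G_facts(5,6,9) by (simp add: collapse_def in_split_def \<psi>_def in_edges_def)
    qed
  qed
  ultimately show ?thesis
    unfolding graph_iso_by_def by blast
qed

lemma exists_fewer_sources:
  assumes "infinite (UNIV :: 'v set)" and "infinite (UNIV :: 'e set)"
  shows "\<exists>(G' :: ('v, 'e) dgraph) u g. move_step\<^sup>*\<^sup>* G G' \<and> collapsible G' u g \<and>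
    card (in_sources G' u) < card (in_sources G v) \<and> graph_iso (collapse G' u g) (collapse G v f)"
proof -
  obtain \<phi> :: "'v \<times> nat \<Rightarrow> 'v" where \<phi>: "inj \<phi>"
    using infinite_inj_prod_nat[OF assms(1)] .
  obtain \<psi> :: "'e \<times> nat \<Rightarrow> 'e" where \<psi>: "inj \<psi>"
    using infinite_inj_prod_nat[OF assms(2)] .
  obtain \<chi> :: "'e + 'e \<Rightarrow> 'e" where \<chi>: "inj \<chi>"
    using infinite_inj_sum[OF assms(2)] .
  define G1 where "G1 = relabel \<phi> \<psi> split"
  define G2 where "G2 = relabel id \<chi> (collapse G1 (\<phi> (v, 0)) (\<psi> (f, 0)))"
  define g2 where "g2 = \<chi> (map_sum \<psi> \<psi> (Inl (f, 1)))"
  note split = collapsibleD[OF collapsible_split]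
  note reduced = collapsibleD[OF collapsible_reduced]
  have iso1: "graph_iso_by split G1 \<phi> \<psi>"
    unfolding G1_def using \<phi> \<psi> by (rule graph_iso_by_relabel)
  have coll1: "collapsible G1 (\<phi> (v, 0)) (\<psi> (f, 0))"
    using graph_iso_by_collapsible[OF iso1 collapsible_split] .
  have iso_G2: "graph_iso_by (collapse G1 (\<phi> (v, 0)) (\<psi> (f, 0))) G2 id \<chi>"
    unfolding G2_def using inj_on_id \<chi> by (rule graph_iso_by_relabel)
  have iso2: "graph_iso_by reduced G2 \<phi> (\<chi> \<circ> map_sum \<psi> \<psi>)"
    using graph_iso_by_comp[OF graph_iso_by_collapse[OF iso1 split(1,3,4)] iso_G2] by simp
  have "move_step G G1"
    unfolding move_step_def graph_iso_iff_graph_iso_by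
    using collapsible coll1 move_I_split iso1 unfolding collapsible_def by blast
  moreover have "move_step G1 G2"
  proof -
    have "in_sources G1 (\<phi> (v, 0)) = {\<phi> (w, 0)}"
      using graph_iso_by_in_sources[OF iso1 split(1,3)] in_sources_split_0 by simp
    then have "move_R G1 (\<phi> (v, 0)) (collapse G1 (\<phi> (v, 0)) (\<psi> (f, 0)))"
      by (rule move_R_collapse[OF coll1])
    moreover have "fin_graph G2"
      using graph_iso_by_fin_graph[OF iso2 fin_graph_collapse[OF collapsible_split]] .
    ultimately show ?thesis
      unfolding move_step_def graph_iso_iff_graph_iso_by
      using coll1 iso_G2 unfolding collapsible_def by blast
  qed
  ultimately have "move_step\<^sup>*\<^sup>* G G2"
    by simp
  moreover have "collapsible G2 (\<phi> (v, 1)) g2"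
    using graph_iso_by_collapsible[OF iso2 collapsible_reduced] unfolding g2_def by simp
  moreover have "card (in_sources G2 (\<phi> (v, 1))) < card (in_sources G v)"
  proof -
    have "inj (\<lambda>u. \<phi> (u, 0 :: nat))"
      using \<phi> by (simp add: inj_def)
    moreover have "in_sources G2 (\<phi> (v, 1)) = (\<lambda>u. \<phi> (u, 0)) ` (in_sources G v - {w})"
      using graph_iso_by_in_sources[OF iso2 reduced(1,3)] unfolding in_sources_reduced_1 image_image .
    ultimately have "card (in_sources G2 (\<phi> (v, 1))) = card (in_sources G v - {w})"
      by (simp add: card_image inj_on_subset)
    also have "\<dots> < card (in_sources G v)"
      using G_facts(11) w_in_sources by (rule card_Diff1_less)
    finally show ?thesis .
  qed
  moreover have "graph_iso (collapse G2 (\<phi> (v, 1)) g2) (collapse G v f)"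
  proof (rule graph_iso_trans)
    have "graph_iso (collapse reduced (v, 1) (Inl (f, 1))) (collapse G2 (\<phi> (v, 1)) g2)"
      using graph_iso_by_collapse[OF iso2 reduced(1,3,4)]
      unfolding graph_iso_iff_graph_iso_by g2_def by auto
    then show "graph_iso (collapse G2 (\<phi> (v, 1)) g2) (collapse reduced (v, 1) (Inl (f, 1)))"
      using fin_graph_collapse[OF collapsible_reduced] unfolding fin_graph_def
      by (blast intro: graph_iso_sym)
    show "graph_iso (collapse reduced (v, 1) (Inl (f, 1))) (collapse G v f)"
      using graph_iso_by_collapse_reduced unfolding graph_iso_iff_graph_iso_by by blast
  qed
  ultimately show ?thesis
    by blast
qed

end

lemma move_equiv_if_steps:
  assumes steps: "move_step\<^sup>*\<^sup>* G H" and "move_equiv H E"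
  shows "move_equiv G E"
proof -
  have "fin_graph G"
    using steps \<open>move_equiv H E\<close>
    by (cases rule: converse_rtranclpE) (auto simp: move_step_def move_equiv_def)
  moreover have "(sup move_step move_step\<inverse>\<inverse>)\<^sup>*\<^sup>* G H"
    using steps by (rule rtranclp_mono[THEN predicate2D, rotated]) auto
  ultimately show ?thesis
    using \<open>move_equiv H E\<close> unfolding move_equiv_def by (meson rtranclp_trans)
qed

lemma move_equiv_collapse:
  fixes G E :: "('v, 'e) dgraph"
  assumes "infinite (UNIV :: 'v set)" and "infinite (UNIV :: 'e set)"
    and "collapsible G v f" and "graph_iso (collapse G v f) E"
  shows "move_equiv G E"
  using assms(3,4)
proof (induction "card (in_sources G v)" arbitrary: G v f rule: less_induct)
  case less
  obtain w where w: "w \<in> in_sources G v"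
    using collapsibleD(7)[OF less.prems(1)] by blast
  have fin_G: "fin_graph G"
    using less.prems(1) unfolding collapsible_def by simp
  obtain \<phi> \<psi> where "graph_iso_by (collapse G v f) E \<phi> \<psi>"
    using less.prems(2) unfolding graph_iso_iff_graph_iso_by by blast
  then have fin_E: "fin_graph E"
    using fin_graph_collapse[OF less.prems(1)] by (rule graph_iso_by_fin_graph)
  show ?case
  proof (cases "in_sources G v = {w}")
    case True
    have "move_step G E"
      unfolding move_step_def
      using fin_G fin_E move_R_collapse[OF less.prems(1) True] less.prems(2) by blast
    then show ?thesis
      using fin_G fin_E unfolding move_equiv_def by (simp add: r_into_rtranclp)
  next
    case False
    then interpret source_split G v f w
      using less.prems(1) w by unfold_locales
    obtain G' u g where steps: "move_step\<^sup>*\<^sup>* G G'" and coll: "collapsible G' u g"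
      and fewer: "card (in_sources G' u) < card (in_sources G v)"
      and iso: "graph_iso (collapse G' u g) (collapse G v f)"
      using exists_fewer_sources[OF assms(1,2)] by blast
    have "move_equiv G' E"
      using less.hyps[OF fewer coll graph_iso_trans[OF iso less.prems(2)]] .
    then show ?thesis
      using steps by (rule move_equiv_if_steps[rotated])
  qed
qed

lemma graph_iso_by_collapse_renamed:
  assumes out: "out_edges G v = {f}"
    and c: "inj_on c (in_edges G v)"
    and disj: "c ` in_edges G v \<inter> (edges G - (in_edges G v \<union> out_edges G v)) = {}"
    and verts_E: "verts E = verts G - {v}"
    and edges_E: "edges E = (edges G - (in_edges G v \<union> out_edges G v)) \<union> c ` in_edges G v"
    and kept: "\<forall>e \<in> edges G - (in_edges G v \<union> out_edges G v). rng E e = rng G e \<and> src E e = src G e"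
    and new: "\<forall>e \<in> in_edges G v. rng E (c e) = rng G f \<and> src E (c e) = src G e"
  shows "graph_iso_by (collapse G v f) E id (case_sum id c)"
proof -
  have K: "edges G - (in_edges G v \<union> out_edges G v) = edges G - in_edges G v - {f}"
    using out by blast
  have "bij_betw (case_sum id c) (edges (collapse G v f)) (edges E)"
    using bij_betw_case_sum[OF inj_on_id c] disj
    unfolding collapse_def edges_E K by (simp add: Int_commute)
  moreover have "bij_betw id (verts (collapse G v f)) (verts E)"
    unfolding collapse_def verts_E by simp
  moreover have "\<forall>e \<in> edges (collapse G v f).
      rng E (case_sum id c e) = id (rng (collapse G v f) e) \<and>
      src E (case_sum id c e) = id (src (collapse G v f) e)"
    using kept new unfolding K by (auto simp: collapse_def)
  ultimately show ?thesis
    unfolding graph_iso_by_def by blast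
qed

theorem lemma5p1:
  fixes G E :: "('v, 'e) dgraph" and v :: 'v and f0 :: 'e and c :: "'e \<Rightarrow> 'e"
  assumes "infinite (UNIV :: 'v set)" and "infinite (UNIV :: 'e set)"
    and "is_graph G" and "finite (verts G)"
    and "v \<in> verts G" and "regular G v" and "\<not> is_source G v"
    and "out_edges G v = {f0}" and "rng G f0 \<noteq> v"
    and "inj_on c (in_edges G v)"
    and "c ` in_edges G v \<inter> (edges G - (in_edges G v \<union> out_edges G v)) = {}"
    and "verts E = verts G - {v}"
    and "edges E = (edges G - (in_edges G v \<union> out_edges G v)) \<union> c ` in_edges G v"
    and "\<forall>e \<in> edges G - (in_edges G v \<union> out_edges G v). rng E e = rng G e \<and> src E e = src G e"
    and "\<forall>e \<in> in_edges G v. rng E (c e) = rng G f0 \<and> src E (c e) = src G e"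
  shows "move_equiv G E"
proof -
  have "collapsible G v f0"
    using assms(3-5,7-9) unfolding collapsible_def fin_graph_def by blast
  moreover have "graph_iso (collapse G v f0) E"
    using graph_iso_by_collapse_renamed[OF assms(8,10-15)]
    unfolding graph_iso_iff_graph_iso_by by blast
  ultimately show ?thesis
    using move_equiv_collapse[OF assms(1,2)] by blast
qed

end
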